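(* Let $U$ be a reflexive separable Banach space, let $\xi\sim\mathcal N(0,\Sigma)$ be a centered $m$-dimensional Gaussian random vector with covariance matrix $\Sigma$, and let $g\colon U\times\mathbb R^m\to\mathbb R$ be locally Lipschitzian and jointly convex in both variables $(u,z)$. Let $\bar u\in U$ satisfy $g(\bar u,0)<0$ and assume that the set $M:=\{z\in\mathbb R^m\mid g(\bar u,z)\le 0\}$ is bounded. Let $\mathcal N(\bar u)$ be an open neighborhood of $\bar u$ such that $g(u,0)<0$ for all $u\in\mathcal N(\bar u)$. Then for each $v\in\mathbb S^{m-1}$ the function $u\mapsto -e(u,v)$ is Clarke regular on $\mathcal N(\bar u)$, where $e$ is the radial probability function defined below.
   Context: $\Sigma^{1/2}$ denotes a root of $\Sigma$. The radial probability function $e\colon U\times\mathbb S^{m-1}\to\mathbb R$ is $e(u,v):=\mu_\eta\{r\ge 0\mid g(u,r\Sigma^{1/2}v)\le 0\}$, where $\mu_\eta$ is the one-dimensional chi distribution with $m$ degrees of freedom and $\mathbb S^{m-1}$ is the unit sphere in $\mathbb R^m$. A locally Lipschitzian function is Clarke regular at a point if for every direction its ordinary directional derivative exists there and coincides with its Clarke generalized directional derivative; it is Clarke regular on a set if it is so at each point of the set. *)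

theory Defs
  imports "HOL-Analysis.Analysis" "HOL-Probability.Probability"
begin

definition reflexive_space :: "'u::real_normed_vector itself \<Rightarrow> bool" where
  "reflexive_space _ \<longleftrightarrow>
     (\<forall>\<phi> :: ('u \<Rightarrow>\<^sub>L real) \<Rightarrow>\<^sub>L real. \<exists>u::'u. \<forall>f. blinfun_apply \<phi> f = blinfun_apply f u)"

definition separable_type :: "'u::metric_space itself \<Rightarrow> bool" where
  "separable_type _ \<longleftrightarrow> separable_space (euclidean :: 'u topology)"

definition locally_lipschitz_on :: "'a::metric_space set \<Rightarrow> ('a \<Rightarrow> 'b::metric_space) \<Rightarrow> bool" where
  "locally_lipschitz_on S f \<longleftrightarrow> (\<forall>x\<in>S. \<exists>e>0. \<exists>L. L-lipschitz_on (ball x e) f)"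

definition covariance_matrix :: "real^'m^'m \<Rightarrow> bool" where
  "covariance_matrix S \<longleftrightarrow> transpose S = S \<and> (\<forall>x. 0 \<le> x \<bullet> (S *v x))"

definition chi_density :: "nat \<Rightarrow> real \<Rightarrow> real" where
  "chi_density k r = (if r \<ge> 0 then r ^ (k - 1) * exp (- (r\<^sup>2) / 2)
       / (2 powr (real k / 2 - 1) * Gamma (real k / 2)) else 0)"

definition chi_distribution :: "nat \<Rightarrow> real measure" where
  "chi_distribution k = density lborel (\<lambda>r. ennreal (chi_density k r))"

text \<open>Radial probability function e(u,v) = mu_eta{r>=0 | g(u, r Sigma^(1/2) v) <= 0}.\<close>
definition radial_prob ::
  "('u \<Rightarrow> real^'m \<Rightarrow> real) \<Rightarrow> real^'m^'m \<Rightarrow> 'u \<Rightarrow> real^'m \<Rightarrow> real" where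
  "radial_prob g R u v =
     measure (chi_distribution CARD('m)) {r. r \<ge> 0 \<and> g u (r *\<^sub>R (R *v v)) \<le> 0}"

definition has_dir_deriv :: "('u::real_normed_vector \<Rightarrow> real) \<Rightarrow> 'u \<Rightarrow> 'u \<Rightarrow> real \<Rightarrow> bool" where
  "has_dir_deriv f x d D \<longleftrightarrow> ((\<lambda>t. (f (x + t *\<^sub>R d) - f x) / t) \<longlongrightarrow> D) (at_right 0)"

definition clarke_dir_deriv :: "('u::real_normed_vector \<Rightarrow> real) \<Rightarrow> 'u \<Rightarrow> 'u \<Rightarrow> ereal" where
  "clarke_dir_deriv f x d =
     Limsup (at (x, 0) within (UNIV \<times> {0<..}))
            (\<lambda>(y, t). ereal ((f (y + t *\<^sub>R d) - f y) / t))"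

definition clarke_regular_at :: "('u::real_normed_vector \<Rightarrow> real) \<Rightarrow> 'u \<Rightarrow> bool" where
  "clarke_regular_at f x \<longleftrightarrow>
     locally_lipschitz_on {x} f \<and>
     (\<forall>d. \<exists>D. has_dir_deriv f x d D \<and> clarke_dir_deriv f x d = ereal D)"

definition clarke_regular_on :: "'u::real_normed_vector set \<Rightarrow> ('u \<Rightarrow> real) \<Rightarrow> bool" where
  "clarke_regular_on S f \<longleftrightarrow> (\<forall>x\<in>S. clarke_regular_at f x)"

end

theory Submission
  imports Defs
begin

(* Fix v and put w = R v. If w = 0, then e(., v) is constant on N. Otherwise joint convexity of g makes
   each ray set {r >= 0. g u (r w) <= 0} an interval [0, rho u], bounded because the sublevel set at ubar
   is bounded, and rho is concave on N; thus e(u, v) = F (rho u) for the chi distribution function F, and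
   -e(., v) = phi o h with h = -rho convex and bounded above near each point of N and phi s = -F (-s)
   continuously differentiable and nondecreasing. Such a composition is Clarke regular: h is locally
   Lipschitz, its difference quotients decrease as t decreases, and the difference quotients of phi o h
   are phi' (h x) times those of h up to o(1) as (y, t) tends to (x, 0+). *)

section \<open>Difference quotients and Clarke regularity\<close>

abbreviation clarke_filter :: "'u::real_normed_vector \<Rightarrow> ('u \<times> real) filter" where
  "clarke_filter x \<equiv> at (x, 0) within UNIV \<times> {0<..}"

definition diff_quot :: "('u::real_normed_vector \<Rightarrow> real) \<Rightarrow> 'u \<Rightarrow> 'u \<times> real \<Rightarrow> real" where
  "diff_quot f d = (\<lambda>(y, t). (f (y + t *\<^sub>R d) - f y) / t)"

lemma diff_quot_Pair [simp]: "diff_quot f d (y, t) = (f (y + t *\<^sub>R d) - f y) / t"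
  by (simp add: diff_quot_def)

lemma has_dir_deriv_iff_diff_quot:
  "has_dir_deriv f x d D \<longleftrightarrow> ((\<lambda>t. diff_quot f d (x, t)) \<longlongrightarrow> D) (at_right 0)"
  by (simp add: has_dir_deriv_def)

lemma clarke_dir_deriv_eq_Limsup:
  "clarke_dir_deriv f x d = Limsup (clarke_filter x) (\<lambda>p. ereal (diff_quot f d p))"
  by (simp add: clarke_dir_deriv_def diff_quot_def case_prod_unfold)

lemma eventually_clarke_filter_pos: "\<forall>\<^sub>F p in clarke_filter x. 0 < snd p"
  unfolding eventually_at_filter by (auto intro!: always_eventually)

lemma tendsto_fst_clarke_filter: "(fst \<longlongrightarrow> x) (clarke_filter x)"
  using tendsto_fst[OF tendsto_ident_at, of "(x, 0)"] by simp

lemma tendsto_snd_clarke_filter: "(snd \<longlongrightarrow> 0) (clarke_filter x)"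
  using tendsto_snd[OF tendsto_ident_at, of "(x, 0)"] by simp

lemma tendsto_shift_clarke_filter: "((\<lambda>p. fst p + snd p *\<^sub>R d) \<longlongrightarrow> x) (clarke_filter x)"
  using tendsto_add[OF tendsto_fst_clarke_filter tendsto_scaleR[OF tendsto_snd_clarke_filter tendsto_const]]
  by simp

lemma filterlim_Pair_clarke_filter: "filterlim (Pair x) (clarke_filter x) (at_right 0)"
proof (rule filterlim_at_withinI)
  show "filterlim (Pair x) (nhds (x, 0)) (at_right 0)"
    by (intro tendsto_intros)
  show "\<forall>\<^sub>F t in at_right 0. (x, t) \<in> UNIV \<times> {0<..} - {(x, 0)}"
    by (simp add: eventually_at_filter)
qed

lemma Limsup_filter_mono: "F \<le> G \<Longrightarrow> Limsup F f \<le> Limsup G (f :: _ \<Rightarrow> ereal)"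
  unfolding Limsup_def by (rule INF_superset_mono) (auto simp: le_filter_def)

lemma clarke_dir_deriv_ge:
  assumes "has_dir_deriv f x d D"
  shows "ereal D \<le> clarke_dir_deriv f x d"
proof -
  have "ereal D = Limsup (at_right 0) (\<lambda>t. ereal (diff_quot f d (x, t)))"
    using assms by (intro lim_imp_Limsup[symmetric] tendsto_ereal) (auto simp: has_dir_deriv_iff_diff_quot)
  also have "\<dots> \<le> Limsup (filtermap (Pair x) (at_right 0)) (\<lambda>p. ereal (diff_quot f d p))"
    by (rule Limsup_filtermap_ge)
  also have "\<dots> \<le> clarke_dir_deriv f x d"
    unfolding clarke_dir_deriv_eq_Limsup
    by (rule Limsup_filter_mono) (use filterlim_Pair_clarke_filter in \<open>simp add: filterlim_def\<close>)
  finally show ?thesis .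
qed

lemma clarke_dir_deriv_le:
  assumes "\<And>e. e > 0 \<Longrightarrow> \<forall>\<^sub>F p in clarke_filter x. diff_quot f d p \<le> D + e"
  shows "clarke_dir_deriv f x d \<le> ereal D"
  unfolding clarke_dir_deriv_eq_Limsup
proof (rule ereal_le_epsilon2)
  fix e :: real assume "e > 0"
  then show "Limsup (clarke_filter x) (\<lambda>p. ereal (diff_quot f d p)) \<le> ereal D + ereal e"
    using assms by (intro Limsup_bounded) (auto elim!: eventually_mono)
qed

lemma clarke_regular_atI:
  assumes "locally_lipschitz_on {x} f"
    and "\<And>d. has_dir_deriv f x d (D d)"
    and "\<And>d e. e > 0 \<Longrightarrow> \<forall>\<^sub>F p in clarke_filter x. diff_quot f d p \<le> D d + e"
  shows "clarke_regular_at f x"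
  unfolding clarke_regular_at_def
proof (intro conjI allI exI)
  fix d
  show "has_dir_deriv f x d (D d)" by (fact assms(2))
  show "clarke_dir_deriv f x d = ereal (D d)"
    using clarke_dir_deriv_ge[OF assms(2)] clarke_dir_deriv_le[OF assms(3)] by (rule order.antisym[rotated])
qed (fact assms(1))

lemma eventually_clarke_filter_ball:
  assumes "r > 0"
  shows "\<forall>\<^sub>F p in clarke_filter x. fst p \<in> ball x r \<and> fst p + snd p *\<^sub>R d \<in> ball x r \<and> 0 < snd p"
proof (intro eventually_conj eventually_clarke_filter_pos)
  show "\<forall>\<^sub>F p in clarke_filter x. fst p \<in> ball x r"
    using assms by (intro topological_tendstoD[OF tendsto_fst_clarke_filter]) auto
  show "\<forall>\<^sub>F p in clarke_filter x. fst p + snd p *\<^sub>R d \<in> ball x r"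
    using assms by (intro topological_tendstoD[OF tendsto_shift_clarke_filter]) auto
qed

lemma lipschitz_on_diff_quot_bound:
  assumes "L-lipschitz_on (ball x r) h" "r > 0"
  shows "\<forall>\<^sub>F p in clarke_filter x. \<bar>diff_quot h d p\<bar> \<le> L * norm d"
  using eventually_clarke_filter_ball[OF assms(2), of x d]
proof eventually_elim
  case (elim p)
  obtain y t where p: "p = (y, t)" by (cases p)
  have "\<bar>h (y + t *\<^sub>R d) - h y\<bar> \<le> L * (t * norm d)"
    using lipschitz_onD[OF assms(1), of "y + t *\<^sub>R d" y] elim by (simp add: p dist_norm)
  then show ?case
    using elim by (simp add: p abs_divide divide_le_eq mult_ac)
qed

lemma continuous_on_if_locally_lipschitz_on:
  assumes "locally_lipschitz_on S f"
  shows "continuous_on S f"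
proof (rule continuous_at_imp_continuous_on, rule ballI)
  fix x assume "x \<in> S"
  then obtain e L where "e > 0" "L-lipschitz_on (ball x e) f"
    using assms unfolding locally_lipschitz_on_def by blast
  then have "continuous_on (ball x e) f"
    by (simp add: lipschitz_on_continuous_on)
  with \<open>e > 0\<close> show "isCont f x"
    by (simp add: continuous_on_eq_continuous_at)
qed

section \<open>Convex functions\<close>

lemma convex_on_diff_quot_mono:
  assumes "convex_on S h" "y \<in> S" "y + b *\<^sub>R d \<in> S" "0 < a" "a \<le> b"
  shows "diff_quot h d (y, a) \<le> diff_quot h d (y, b)"
proof -
  have "y + a *\<^sub>R d = (1 - a/b) *\<^sub>R y + (a/b) *\<^sub>R (y + b *\<^sub>R d)"
    using assms by (simp add: algebra_simps)
  then have "h (y + a *\<^sub>R d) \<le> (1 - a/b) * h y + (a/b) * h (y + b *\<^sub>R d)"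
    using convex_onD[OF assms(1), of "a/b" y "y + b *\<^sub>R d"] assms by simp
  then have "h (y + a *\<^sub>R d) - h y \<le> (a/b) * (h (y + b *\<^sub>R d) - h y)"
    by (simp add: algebra_simps)
  then show ?thesis
    using assms by (simp add: field_simps)
qed

lemma convex_on_ball_ge_reflection:
  fixes h :: "'a::real_normed_vector \<Rightarrow> real"
  assumes "convex_on (ball x r) h" "\<And>y. y \<in> ball x r \<Longrightarrow> h y \<le> M" "y \<in> ball x r"
  shows "2 * h x - M \<le> h y"
proof -
  have "dist x (2 *\<^sub>R x - y) = dist x y"
    by (simp add: dist_norm scaleR_2 norm_minus_commute algebra_simps)
  then have y': "2 *\<^sub>R x - y \<in> ball x r"
    using assms(3) by simp
  have "x = (1 - 1/2) *\<^sub>R y + (1/2) *\<^sub>R (2 *\<^sub>R x - y)"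
    by (simp add: algebra_simps)
  then have "h x \<le> (1 - 1/2) * h y + (1/2) * h (2 *\<^sub>R x - y)"
    using convex_onD[OF assms(1), of "1/2" y "2 *\<^sub>R x - y"] assms(3) y' by simp
  with assms(2)[OF y'] show ?thesis by simp
qed

text \<open>Extend the segment from \<open>y\<close> through \<open>z\<close> beyond \<open>z\<close> by \<open>r/2\<close>; its endpoint \<open>w\<close> stays in
  the ball, and convexity along the segment bounds the slope by \<open>(h w - h y) / (r/2)\<close>, which is at
  most \<open>4 (M - h x) / r\<close> because \<open>h y \<ge> 2 h x - M\<close>.\<close>
lemma convex_on_half_ball_diff_le:
  fixes h :: "'a::real_normed_vector \<Rightarrow> real"
  assumes r: "r > 0" and cv: "convex_on (ball x r) h" and bd: "\<And>y. y \<in> ball x r \<Longrightarrow> h y \<le> M"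
    and y: "y \<in> ball x (r/2)" and z: "z \<in> ball x (r/2)"
  shows "h z - h y \<le> 4 * (M - h x) / r * norm (z - y)"
proof (cases "z = y")
  case False
  define n where "n = norm (z - y)"
  have n: "n > 0" using False by (simp add: n_def)
  define w where "w = z + (r / (2 * n)) *\<^sub>R (z - y)"
  define m where "m = 2 * n / (2 * n + r)"
  have m: "0 \<le> m" "m \<le> 1" "m \<le> 2 * n / r" using n r by (auto simp: m_def field_simps)
  have "norm (w - x) \<le> norm (z - x) + norm ((r / (2 * n)) *\<^sub>R (z - y))"
    unfolding w_def by (metis add.commute add_diff_eq norm_triangle_ineq)
  also have "norm ((r / (2 * n)) *\<^sub>R (z - y)) = r/2"
    using n r by (simp add: n_def)
  finally have w: "w \<in> ball x r" using z by (simp add: dist_norm norm_minus_commute)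
  have yz: "y \<in> ball x r" "z \<in> ball x r" using y z r by auto
  have "m * (r / (2 * n)) = 1 - m"
    using n r by (simp add: m_def field_simps)
  then have "(1 - m) *\<^sub>R y + m *\<^sub>R w = (1 - m) *\<^sub>R y + m *\<^sub>R z + (1 - m) *\<^sub>R (z - y)"
    by (simp add: w_def scaleR_add_right)
  also have "\<dots> = z"
    by (simp add: algebra_simps)
  finally have "(1 - m) *\<^sub>R y + m *\<^sub>R w = z" .
  then have "h z \<le> (1 - m) * h y + m * h w"
    using convex_onD[OF cv m(1,2) yz(1) w] by simp
  then have "h z - h y \<le> m * (h w - h y)" by (simp add: algebra_simps)
  also have "\<dots> \<le> m * (2 * (M - h x))"
    using bd[OF w] convex_on_ball_ge_reflection[OF cv bd yz(1)] m by (intro mult_left_mono) auto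
  also have "\<dots> \<le> 2 * n / r * (2 * (M - h x))"
    using m bd[of x] r by (intro mult_right_mono) auto
  also have "\<dots> = 4 * (M - h x) / r * norm (z - y)"
    by (simp add: n_def field_simps)
  finally show ?thesis .
qed simp

lemma convex_on_bounded_above_lipschitz_on:
  fixes h :: "'a::real_normed_vector \<Rightarrow> real"
  assumes "r > 0" "convex_on (ball x r) h" "\<And>y. y \<in> ball x r \<Longrightarrow> h y \<le> M"
  shows "(4 * (M - h x) / r)-lipschitz_on (ball x (r/2)) h"
proof (rule lipschitz_onI)
  fix y z assume "y \<in> ball x (r/2)" "z \<in> ball x (r/2)"
  then have "h z - h y \<le> 4 * (M - h x) / r * norm (z - y)" "h y - h z \<le> 4 * (M - h x) / r * norm (y - z)"
    by (intro convex_on_half_ball_diff_le[OF assms]; simp)+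
  then show "dist (h y) (h z) \<le> 4 * (M - h x) / r * dist y z"
    by (simp add: dist_norm dist_real_def norm_minus_commute abs_le_iff)
next
  show "0 \<le> 4 * (M - h x) / r" using assms by auto
qed

lemma convex_on_has_dir_deriv:
  assumes "open S" "convex_on S h" "x \<in> S" "L-lipschitz_on S h"
  obtains D where "has_dir_deriv h x d D"
proof -
  have "((\<lambda>t. x + t *\<^sub>R d) \<longlongrightarrow> x) (at_right 0)"
    by (auto intro!: tendsto_eq_intros)
  then have "\<forall>\<^sub>F t in at_right 0. x + t *\<^sub>R d \<in> S"
    using assms(1,3) by (rule topological_tendstoD)
  then obtain s where "s > 0" and s: "\<And>t. 0 < t \<Longrightarrow> t < s \<Longrightarrow> x + t *\<^sub>R d \<in> S"
    unfolding eventually_at_right_field by auto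
  let ?q = "\<lambda>t. diff_quot h d (x, t)"
  have mono: "?q a \<le> ?q b" if "a \<in> {0<..<s}" "b \<in> {0<..<s}" "0 < a" "a \<le> b" for a b
    using that by (intro convex_on_diff_quot_mono[OF assms(2,3) s]) auto
  have bound: "- (L * norm d) \<le> ?q a" if "a \<in> {0<..<s}" for a
  proof -
    have "\<bar>h (x + a *\<^sub>R d) - h x\<bar> \<le> a * (L * norm d)"
      using lipschitz_onD[OF assms(4) s assms(3), of a] that by (simp add: dist_norm mult.left_commute)
    with that show ?thesis by (simp add: field_simps abs_le_iff)
  qed
  have "(?q \<longlongrightarrow> Inf (?q ` ({0<..} \<inter> {0<..<s}))) (at 0 within {0<..} \<inter> {0<..<s})"
    using mono bound by (intro Lim_right_bound) auto
  moreover have "at (0::real) within {0<..} \<inter> {0<..<s} = at_right 0"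
    by (rule at_within_nhd[of _ "{-s<..<s}"]) (use \<open>s > 0\<close> in auto)
  ultimately show ?thesis
    by (intro that) (simp add: has_dir_deriv_iff_diff_quot)
qed

lemma tendsto_diff_quot_fixed_step:
  assumes "isCont h x" "isCont h (x + s *\<^sub>R d)"
  shows "((\<lambda>p. diff_quot h d (fst p, s)) \<longlongrightarrow> diff_quot h d (x, s)) (clarke_filter x)"
proof -
  have "((\<lambda>p. h (fst p + s *\<^sub>R d)) \<longlongrightarrow> h (x + s *\<^sub>R d)) (clarke_filter x)"
    by (rule isCont_tendsto_compose[OF assms(2) tendsto_add[OF tendsto_fst_clarke_filter tendsto_const]])
  moreover have "((\<lambda>p. h (fst p)) \<longlongrightarrow> h x) (clarke_filter x)"
    by (rule isCont_tendsto_compose[OF assms(1) tendsto_fst_clarke_filter])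
  ultimately show ?thesis
    unfolding diff_quot_Pair divide_inverse by (intro tendsto_mult_right tendsto_diff)
qed

text \<open>For \<open>0 < t \<le> s\<close> convexity bounds the quotient at \<open>(y, t)\<close> by the one at \<open>(y, s)\<close>,
  which tends to the quotient at \<open>(x, s)\<close> as \<open>y \<rightarrow> x\<close>; choose \<open>s\<close> with the latter below \<open>D + e\<close>.\<close>
lemma convex_on_diff_quot_eventually_le:
  assumes "open S" "convex_on S h" "continuous_on S h" "x \<in> S" "has_dir_deriv h x d D" "e > 0"
  shows "\<forall>\<^sub>F p in clarke_filter x. diff_quot h d p \<le> D + e"
proof -
  have "\<forall>\<^sub>F t in at_right 0. 0 < t \<and> x + t *\<^sub>R d \<in> S \<and> diff_quot h d (x, t) < D + e"
  proof (intro eventually_conj)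
    show "\<forall>\<^sub>F t in at_right 0. x + t *\<^sub>R d \<in> S"
      by (rule topological_tendstoD[OF _ assms(1,4)]) (auto intro!: tendsto_eq_intros)
    show "\<forall>\<^sub>F t in at_right 0. diff_quot h d (x, t) < D + e"
      using assms(5,6) by (intro order_tendstoD) (auto simp: has_dir_deriv_iff_diff_quot)
  qed (simp add: eventually_at_right_less)
  then have "\<exists>s. 0 < s \<and> x + s *\<^sub>R d \<in> S \<and> diff_quot h d (x, s) < D + e"
    by (rule eventually_happens'[rotated]) simp
  then obtain s where s: "0 < s" "x + s *\<^sub>R d \<in> S" "diff_quot h d (x, s) < D + e"
    by blast
  have cont: "isCont h y" if "y \<in> S" for y
    using assms(1,3) that continuous_on_eq_continuous_at by blast
  have "\<forall>\<^sub>F p in clarke_filter x. fst p \<in> S \<and> fst p + s *\<^sub>R d \<in> S \<and> snd p \<in> {0<..s}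
      \<and> diff_quot h d (fst p, s) < D + e"
  proof (intro eventually_conj)
    show "\<forall>\<^sub>F p in clarke_filter x. fst p \<in> S"
      using assms(1,4) by (rule topological_tendstoD[OF tendsto_fst_clarke_filter])
    show "\<forall>\<^sub>F p in clarke_filter x. fst p + s *\<^sub>R d \<in> S"
      using assms(1) s(2)
      by (rule topological_tendstoD[OF tendsto_add[OF tendsto_fst_clarke_filter tendsto_const]])
    show "\<forall>\<^sub>F p in clarke_filter x. snd p \<in> {0<..s}"
      using eventually_clarke_filter_pos order_tendstoD(2)[OF tendsto_snd_clarke_filter s(1)]
      by eventually_elim auto
    show "\<forall>\<^sub>F p in clarke_filter x. diff_quot h d (fst p, s) < D + e"
      using tendsto_diff_quot_fixed_step[OF cont[OF assms(4)] cont[OF s(2)]] s(3) by (rule order_tendstoD)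
  qed
  then show ?thesis
  proof eventually_elim
    case (elim p)
    then have "diff_quot h d (fst p, snd p) \<le> diff_quot h d (fst p, s)"
      by (intro convex_on_diff_quot_mono[OF assms(2)]) auto
    with elim show ?case by (simp add: case_prod_unfold)
  qed
qed

section \<open>Composition with a continuously differentiable function\<close>

lemma isCont_deriv_strict_diff_le:
  fixes \<phi> \<phi>' :: "real \<Rightarrow> real"
  assumes "open I" "a \<in> I" "\<And>s. s \<in> I \<Longrightarrow> (\<phi> has_real_derivative \<phi>' s) (at s)"
    and "isCont \<phi>' a" "e > 0"
  obtains \<eta> where "\<eta> > 0"
    "\<And>s t. \<bar>s - a\<bar> < \<eta> \<Longrightarrow> \<bar>t - a\<bar> < \<eta> \<Longrightarrow> \<bar>\<phi> t - \<phi> s - \<phi>' a * (t - s)\<bar> \<le> e * \<bar>t - s\<bar>"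
proof -
  obtain \<eta>1 where "\<eta>1 > 0" "ball a \<eta>1 \<subseteq> I"
    using assms(1,2) open_contains_ball by blast
  obtain \<eta>2 where "\<eta>2 > 0" and \<eta>2: "\<And>s. \<bar>s - a\<bar> < \<eta>2 \<Longrightarrow> \<bar>\<phi>' s - \<phi>' a\<bar> < e"
    using assms(4,5) unfolding continuous_at_eps_delta dist_real_def by blast
  define \<eta> where "\<eta> = min \<eta>1 \<eta>2"
  have bound: "norm ((\<phi> t - \<phi>' a * t) - (\<phi> s - \<phi>' a * s)) \<le> e * norm (t - s)"
    if "t \<in> ball a \<eta>" "s \<in> ball a \<eta>" for s t
  proof (rule field_differentiable_bound[OF convex_ball _ _ that])
    fix z assume "z \<in> ball a \<eta>"
    then have z: "z \<in> I" "\<bar>z - a\<bar> < \<eta>2"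
      using \<open>ball a \<eta>1 \<subseteq> I\<close> by (auto simp: \<eta>_def dist_real_def abs_minus_commute)
    have "((\<lambda>s. \<phi> s - \<phi>' a * s) has_field_derivative \<phi>' z - \<phi>' a * 1) (at z)"
      by (intro DERIV_diff DERIV_cmult assms(3)[OF z(1)] DERIV_ident)
    then show "((\<lambda>s. \<phi> s - \<phi>' a * s) has_field_derivative \<phi>' z - \<phi>' a) (at z within ball a \<eta>)"
      by (simp add: has_field_derivative_at_within)
    show "norm (\<phi>' z - \<phi>' a) \<le> e"
      using \<eta>2[OF z(2)] by simp
  qed
  have "\<bar>\<phi> t - \<phi> s - \<phi>' a * (t - s)\<bar> \<le> e * \<bar>t - s\<bar>"
    if "\<bar>s - a\<bar> < \<eta>" "\<bar>t - a\<bar> < \<eta>" for s t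
  proof -
    have "t \<in> ball a \<eta>" "s \<in> ball a \<eta>"
      using that by (auto simp: dist_real_def abs_minus_commute)
    moreover have "\<phi> t - \<phi>' a * t - (\<phi> s - \<phi>' a * s) = \<phi> t - \<phi> s - \<phi>' a * (t - s)"
      by (simp add: algebra_simps)
    ultimately show ?thesis
      using bound by (metis real_norm_def)
  qed
  moreover have "\<eta> > 0"
    using \<open>\<eta>1 > 0\<close> \<open>\<eta>2 > 0\<close> by (simp add: \<eta>_def)
  ultimately show ?thesis
    using that by blast
qed

lemma diff_quot_comp_tendsto:
  fixes h :: "'u::real_normed_vector \<Rightarrow> real"
  assumes "open I" "h x \<in> I" "\<And>s. s \<in> I \<Longrightarrow> (\<phi> has_real_derivative \<phi>' s) (at s)"
    and "isCont \<phi>' (h x)" "isCont h x"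
    and bound: "\<forall>\<^sub>F p in clarke_filter x. \<bar>diff_quot h d p\<bar> \<le> K"
  shows "((\<lambda>p. diff_quot (\<lambda>y. \<phi> (h y)) d p - \<phi>' (h x) * diff_quot h d p) \<longlongrightarrow> 0) (clarke_filter x)"
proof (rule tendstoI)
  fix e :: real assume "e > 0"
  define e' where "e' = e / (\<bar>K\<bar> + 1)"
  have "e' > 0" using \<open>e > 0\<close> by (simp add: e'_def)
  with isCont_deriv_strict_diff_le[OF assms(1-4)]
  obtain \<eta> where "\<eta> > 0" and \<eta>: "\<And>s t. \<bar>s - h x\<bar> < \<eta> \<Longrightarrow> \<bar>t - h x\<bar> < \<eta> \<Longrightarrow>
      \<bar>\<phi> t - \<phi> s - \<phi>' (h x) * (t - s)\<bar> \<le> e' * \<bar>t - s\<bar>"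
    by blast
  have "\<forall>\<^sub>F p in clarke_filter x. \<bar>h (fst p) - h x\<bar> < \<eta>"
    using tendstoD[OF isCont_tendsto_compose[OF assms(5) tendsto_fst_clarke_filter] \<open>\<eta> > 0\<close>]
    by (simp add: dist_real_def)
  moreover have "\<forall>\<^sub>F p in clarke_filter x. \<bar>h (fst p + snd p *\<^sub>R d) - h x\<bar> < \<eta>"
    using tendstoD[OF isCont_tendsto_compose[OF assms(5) tendsto_shift_clarke_filter] \<open>\<eta> > 0\<close>]
    by (simp add: dist_real_def)
  ultimately show "\<forall>\<^sub>F p in clarke_filter x.
      dist (diff_quot (\<lambda>y. \<phi> (h y)) d p - \<phi>' (h x) * diff_quot h d p) 0 < e"
    using bound eventually_clarke_filter_pos
  proof eventually_elim
    case (elim p)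
    obtain y t where p: "p = (y, t)" by (cases p)
    let ?a = "h y" and ?b = "h (y + t *\<^sub>R d)"
    have "diff_quot (\<lambda>y. \<phi> (h y)) d p - \<phi>' (h x) * diff_quot h d p
        = (\<phi> ?b - \<phi> ?a - \<phi>' (h x) * (?b - ?a)) / t"
      using elim by (simp add: p field_simps)
    then have "\<bar>diff_quot (\<lambda>y. \<phi> (h y)) d p - \<phi>' (h x) * diff_quot h d p\<bar>
        = \<bar>\<phi> ?b - \<phi> ?a - \<phi>' (h x) * (?b - ?a)\<bar> / t"
      using elim by (simp add: p abs_divide)
    also have "\<dots> \<le> e' * \<bar>?b - ?a\<bar> / t"
      using \<eta>[of ?a ?b] elim by (simp add: p divide_right_mono)
    also have "\<dots> = e' * \<bar>diff_quot h d p\<bar>"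
      using elim by (simp add: p abs_divide)
    also have "\<dots> \<le> e' * \<bar>K\<bar>"
      using elim \<open>e' > 0\<close> by (intro mult_left_mono) auto
    also have "\<dots> < e"
      using \<open>e > 0\<close> by (simp add: e'_def field_simps)
    finally show ?case by (simp add: dist_real_def)
  qed
qed

lemma locally_lipschitz_on_comp_deriv:
  fixes h :: "'u::real_normed_vector \<Rightarrow> real"
  assumes L: "L-lipschitz_on (ball x r) h" and "r > 0"
    and I: "open I" "h x \<in> I" and deriv: "\<And>s. s \<in> I \<Longrightarrow> (\<phi> has_real_derivative \<phi>' s) (at s)"
    and "isCont \<phi>' (h x)"
    and E: "\<And>y. y \<in> ball x r \<Longrightarrow> E y = \<phi> (h y)"
  shows "locally_lipschitz_on {x} E"
proof -
  define c where "c = \<phi>' (h x)"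
  obtain \<eta> where "\<eta> > 0" and \<eta>: "\<And>s t. \<bar>s - h x\<bar> < \<eta> \<Longrightarrow> \<bar>t - h x\<bar> < \<eta> \<Longrightarrow>
      \<bar>\<phi> t - \<phi> s - c * (t - s)\<bar> \<le> 1 * \<bar>t - s\<bar>"
    using isCont_deriv_strict_diff_le[OF I deriv \<open>isCont \<phi>' (h x)\<close>, of 1] unfolding c_def by auto
  have "isCont h x"
    using lipschitz_on_continuous_on[OF L] \<open>r > 0\<close> by (simp add: continuous_on_eq_continuous_at)
  then obtain \<rho>0 where "\<rho>0 > 0" and \<rho>0: "\<And>y. dist y x < \<rho>0 \<Longrightarrow> \<bar>h y - h x\<bar> < \<eta>"
    using \<open>\<eta> > 0\<close> unfolding continuous_at_eps_delta dist_real_def by blast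
  define \<rho> where "\<rho> = min \<rho>0 r"
  have "\<rho> > 0" "ball x \<rho> \<subseteq> ball x r"
    using \<open>\<rho>0 > 0\<close> \<open>r > 0\<close> by (auto simp: \<rho>_def)
  have "(\<bar>c\<bar> + 1)-lipschitz_on (h ` ball x \<rho>) \<phi>"
  proof (rule lipschitz_onI)
    fix s t assume "s \<in> h ` ball x \<rho>" "t \<in> h ` ball x \<rho>"
    then have "\<bar>s - h x\<bar> < \<eta>" "\<bar>t - h x\<bar> < \<eta>"
      using \<rho>0 by (auto simp: \<rho>_def dist_commute)
    from \<eta>[OF this] have "\<bar>\<phi> t - \<phi> s\<bar> \<le> \<bar>c\<bar> * \<bar>t - s\<bar> + \<bar>t - s\<bar>"
      by (simp add: abs_mult[symmetric])
    then show "dist (\<phi> s) (\<phi> t) \<le> (\<bar>c\<bar> + 1) * dist s t"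
      by (simp add: dist_real_def abs_minus_commute algebra_simps)
  qed simp
  with lipschitz_on_subset[OF L \<open>ball x \<rho> \<subseteq> ball x r\<close>]
  have "((\<bar>c\<bar> + 1) * L)-lipschitz_on (ball x \<rho>) (\<lambda>y. \<phi> (h y))"
    by (rule lipschitz_on_compose2)
  then have "((\<bar>c\<bar> + 1) * L)-lipschitz_on (ball x \<rho>) E"
    by (rule lipschitz_on_transform) (use E \<open>ball x \<rho> \<subseteq> ball x r\<close> in auto)
  with \<open>\<rho> > 0\<close> show ?thesis
    unfolding locally_lipschitz_on_def by blast
qed

lemma has_dir_deriv_diff_quot_asymp:
  assumes "has_dir_deriv h x d D"
    and "((\<lambda>p. diff_quot E d p - c * diff_quot h d p) \<longlongrightarrow> 0) (clarke_filter x)"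
  shows "has_dir_deriv E x d (c * D)"
proof -
  have "((\<lambda>t. diff_quot E d (x, t) - c * diff_quot h d (x, t)) \<longlongrightarrow> 0) (at_right 0)"
    using filterlim_compose[OF assms(2) filterlim_Pair_clarke_filter] by simp
  from tendsto_add[OF this tendsto_mult_left[OF assms(1)[unfolded has_dir_deriv_iff_diff_quot], of c]]
  show ?thesis
    by (simp add: has_dir_deriv_iff_diff_quot)
qed

lemma diff_quot_eventually_le_asymp:
  assumes "c \<ge> 0" "e > 0"
    and "\<And>e. e > 0 \<Longrightarrow> \<forall>\<^sub>F p in clarke_filter x. diff_quot h d p \<le> D + e"
    and "((\<lambda>p. diff_quot E d p - c * diff_quot h d p) \<longlongrightarrow> 0) (clarke_filter x)"
  shows "\<forall>\<^sub>F p in clarke_filter x. diff_quot E d p \<le> c * D + e"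
proof -
  define e' where "e' = e / (2 * (c + 1))"
  have "e' > 0" "c * e' \<le> e / 2"
    using assms(1,2) by (auto simp: e'_def field_simps)
  have "\<forall>\<^sub>F p in clarke_filter x. dist (diff_quot E d p - c * diff_quot h d p) 0 < e / 2"
    using assms(2) by (intro tendstoD[OF assms(4)]) simp
  with assms(3)[OF \<open>e' > 0\<close>] show ?thesis
  proof eventually_elim
    case (elim p)
    have "c * diff_quot h d p \<le> c * (D + e')"
      using elim(1) assms(1) by (rule mult_left_mono)
    moreover have "diff_quot E d p < c * diff_quot h d p + e / 2"
      using elim(2) unfolding dist_real_def abs_less_iff by linarith
    ultimately show ?case
      using \<open>c * e' \<le> e / 2\<close> unfolding distrib_left by linarith
  qed
qed

lemma clarke_regular_at_comp_convex:
  fixes h :: "'u::real_normed_vector \<Rightarrow> real"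
  assumes "\<delta> > 0" and cv: "convex_on (ball x \<delta>) h" and bd: "\<And>y. y \<in> ball x \<delta> \<Longrightarrow> h y \<le> M"
    and I: "open I" "h x \<in> I" and deriv: "\<And>s. s \<in> I \<Longrightarrow> (\<phi> has_real_derivative \<phi>' s) (at s)"
    and "isCont \<phi>' (h x)" "\<phi>' (h x) \<ge> 0"
    and E: "\<And>y. y \<in> ball x \<delta> \<Longrightarrow> E y = \<phi> (h y)"
  shows "clarke_regular_at E x"
proof -
  define r where "r = \<delta> / 2"
  have "r > 0" and r: "ball x r \<subseteq> ball x \<delta>"
    using \<open>\<delta> > 0\<close> by (auto simp: r_def)
  obtain L where L: "L-lipschitz_on (ball x r) h"
    using convex_on_bounded_above_lipschitz_on[OF \<open>\<delta> > 0\<close> cv bd] unfolding r_def by blast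
  have cv': "convex_on (ball x r) h"
    using convex_on_subset[OF cv r] by simp
  have cont: "continuous_on (ball x r) h"
    using L by (rule lipschitz_on_continuous_on)
  then have "isCont h x"
    using \<open>r > 0\<close> by (simp add: continuous_on_eq_continuous_at)
  have "\<exists>D. has_dir_deriv h x d D" for d
    using convex_on_has_dir_deriv[OF open_ball cv' _ L] \<open>r > 0\<close> by (metis centre_in_ball)
  then obtain D where D: "\<And>d. has_dir_deriv h x d (D d)"
    by metis
  have quot: "((\<lambda>p. diff_quot E d p - \<phi>' (h x) * diff_quot h d p) \<longlongrightarrow> 0) (clarke_filter x)" for d
  proof (rule Lim_transform_eventually)
    show "((\<lambda>p. diff_quot (\<lambda>y. \<phi> (h y)) d p - \<phi>' (h x) * diff_quot h d p) \<longlongrightarrow> 0) (clarke_filter x)"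
      by (rule diff_quot_comp_tendsto[OF I deriv \<open>isCont \<phi>' (h x)\<close> \<open>isCont h x\<close>
            lipschitz_on_diff_quot_bound[OF L \<open>r > 0\<close>]])
    show "\<forall>\<^sub>F p in clarke_filter x. diff_quot (\<lambda>y. \<phi> (h y)) d p - \<phi>' (h x) * diff_quot h d p
        = diff_quot E d p - \<phi>' (h x) * diff_quot h d p"
      using eventually_clarke_filter_ball[OF \<open>r > 0\<close>, of x d]
      by eventually_elim (use r in \<open>auto simp: E subset_iff\<close>)
  qed
  show ?thesis
  proof (rule clarke_regular_atI)
    show "locally_lipschitz_on {x} E"
      using r by (intro locally_lipschitz_on_comp_deriv[OF L \<open>r > 0\<close> I deriv \<open>isCont \<phi>' (h x)\<close>] E) auto
    show "has_dir_deriv E x d (\<phi>' (h x) * D d)" for d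
      by (rule has_dir_deriv_diff_quot_asymp[OF D quot])
    show "\<forall>\<^sub>F p in clarke_filter x. diff_quot E d p \<le> \<phi>' (h x) * D d + e" if "e > 0" for d e
      using convex_on_diff_quot_eventually_le[OF open_ball cv' cont _ D] \<open>r > 0\<close>
      by (intro diff_quot_eventually_le_asymp[OF \<open>\<phi>' (h x) \<ge> 0\<close> that _ quot]) auto
  qed
qed

lemma clarke_regular_at_locally_constant:
  assumes "\<delta> > 0" "\<And>y. y \<in> ball x \<delta> \<Longrightarrow> f y = f x"
  shows "clarke_regular_at f x"
proof (rule clarke_regular_at_comp_convex[where h = "\<lambda>_. 0" and M = 0 and I = UNIV
      and \<phi> = "\<lambda>_. f x" and \<phi>' = "\<lambda>_. 0"])
  show "convex_on (ball x \<delta>) (\<lambda>_. 0)"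
    by (simp add: convex_on_const)
  show "((\<lambda>_. f x) has_real_derivative 0) (at s)" for s
    by (rule DERIV_const)
  show "f y = f x" if "y \<in> ball x \<delta>" for y
    using assms(2)[OF that] .
qed (simp_all add: assms(1))

section \<open>The chi distribution\<close>

lemma chi_density_nonneg: "0 < k \<Longrightarrow> 0 \<le> chi_density k r"
  by (auto simp: chi_density_def intro!: divide_nonneg_pos mult_pos_pos Gamma_real_pos)

lemma continuous_on_chi_density: "0 < k \<Longrightarrow> continuous_on {0..} (chi_density k)"
proof -
  assume "0 < k"
  have "continuous_on {0..} (\<lambda>r. r ^ (k - 1) * exp (- (r\<^sup>2) / 2) / (2 powr (real k / 2 - 1) * Gamma (real k / 2)))"
    using \<open>0 < k\<close> by (intro continuous_intros) (auto intro!: mult_pos_pos Gamma_real_pos simp: less_imp_neq[symmetric])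
  then show ?thesis
    by (rule continuous_on_cong[THEN iffD1, rotated 2]) (auto simp: chi_density_def)
qed

lemma isCont_chi_density: "0 < k \<Longrightarrow> 0 < r \<Longrightarrow> isCont (chi_density k) r"
  using continuous_on_interior[OF continuous_on_chi_density, of k r] by simp

lemma measure_chi_distribution_atLeastAtMost:
  assumes "0 < k"
  shows "measure (chi_distribution k) {0..b} = integral {0..b} (chi_density k)"
proof -
  have int: "(chi_density k has_integral integral {0..b} (chi_density k)) {0..b}"
    using continuous_on_subset[OF continuous_on_chi_density[OF assms], of "{0..b}"]
    by (auto intro: integrable_continuous_interval)
  have "emeasure (chi_distribution k) {0..b} = (\<integral>\<^sup>+ x. ennreal (chi_density k x) * indicator {0..b} x \<partial>lborel)"
    unfolding chi_distribution_def chi_density_def by (rule emeasure_density) auto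
  also have "\<dots> = ennreal (integral {0..b} (chi_density k))"
    using int chi_density_nonneg[OF assms] by (intro nn_integral_has_integral_lebesgue') auto
  finally show ?thesis
    using integral_nonneg[OF int[THEN has_integral_integrable]] chi_density_nonneg[OF assms]
    unfolding measure_def by simp
qed

lemma chi_cdf_has_real_derivative:
  assumes "0 < k" "0 < b"
  shows "((\<lambda>b. integral {0..b} (chi_density k)) has_real_derivative chi_density k b) (at b)"
proof -
  have "((\<lambda>b. integral {0..b} (chi_density k)) has_real_derivative chi_density k b) (at b within {0..b + 1})"
    using continuous_on_subset[OF continuous_on_chi_density[OF assms(1)], of "{0..b + 1}"] assms(2)
    by (intro integral_has_real_derivative) auto
  moreover have "at b within {0..b + 1} = at b"
    using assms(2) by (intro at_within_interior) auto
  ultimately show ?thesis by simp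
qed

lemma chi_cdf_reflect_has_real_derivative:
  assumes "0 < k" "s < 0"
  shows "((\<lambda>s. - integral {0..- s} (chi_density k)) has_real_derivative chi_density k (- s)) (at s)"
proof -
  from DERIV_chain2[OF chi_cdf_has_real_derivative[OF assms(1)] DERIV_minus[OF DERIV_ident]] assms(2)
  have "((\<lambda>s. integral {0..- s} (chi_density k)) has_real_derivative chi_density k (- s) * - 1) (at s)"
    by simp
  from DERIV_minus[OF this] show ?thesis
    by simp
qed

section \<open>Rays in the sublevel sets of a jointly convex constraint\<close>

definition ray_sublevel :: "('u \<Rightarrow> 'z::real_vector \<Rightarrow> real) \<Rightarrow> 'z \<Rightarrow> 'u \<Rightarrow> real set" where
  "ray_sublevel g w u = {r. 0 \<le> r \<and> g u (r *\<^sub>R w) \<le> 0}"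

definition ray_radius :: "('u \<Rightarrow> 'z::real_vector \<Rightarrow> real) \<Rightarrow> 'z \<Rightarrow> 'u \<Rightarrow> real" where
  "ray_radius g w u = Sup (ray_sublevel g w u)"

locale convex_constraint =
  fixes g :: "'u::real_normed_vector \<Rightarrow> 'z::real_normed_vector \<Rightarrow> real"
  assumes convex: "convex_on UNIV (\<lambda>(u, z). g u z)"
    and continuous: "continuous_on UNIV (\<lambda>(u, z). g u z)"
begin

lemma convex_combination_le:
  assumes "0 \<le> a" "0 \<le> b" "a + b = 1"
  shows "g (a *\<^sub>R u1 + b *\<^sub>R u2) (a *\<^sub>R z1 + b *\<^sub>R z2) \<le> a * g u1 z1 + b * g u2 z2"
  using convex assms unfolding convex_on_def by (force dest: bspec[of _ _ "(u1, z1)"])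

lemma isCont_param: "isCont (\<lambda>u. g u z) u"
  using continuous_on_compose2[OF continuous, of UNIV "\<lambda>u. (u, z)"]
  by (auto intro!: continuous_intros simp: continuous_on_eq_continuous_at)

lemma isCont_ray: "isCont (\<lambda>r. g u (r *\<^sub>R w)) r"
  using continuous_on_compose2[OF continuous, of UNIV "\<lambda>r. (u, r *\<^sub>R w)"]
  by (auto intro!: continuous_intros simp: continuous_on_eq_continuous_at)

text \<open>The point \<open>ubar\<close> is a convex combination of \<open>u\<close> and a point \<open>x\<^sub>l\<close> near \<open>ubar\<close>
  with weight \<open>l\<close> on \<open>u\<close>, so \<open>l\<close> times the sublevel set at \<open>u\<close> lies in the one at \<open>ubar\<close>.\<close>
lemma bounded_sublevel_transfer:
  assumes "g ubar 0 < 0" "bounded {z. g ubar z \<le> 0}"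
  shows "bounded {z. g u z \<le> 0}"
proof -
  obtain B where B: "\<And>z. g ubar z \<le> 0 \<Longrightarrow> norm z \<le> B"
    using assms(2) unfolding bounded_iff by auto
  define x where "x l = ubar + (l / (1 - l)) *\<^sub>R (ubar - u)" for l :: real
  have "(x \<longlongrightarrow> ubar) (at_right 0)"
    unfolding x_def by (auto intro!: tendsto_eq_intros)
  then have "((\<lambda>l. g (x l) 0) \<longlongrightarrow> g ubar 0) (at_right 0)"
    by (rule isCont_tendsto_compose[OF isCont_param])
  then have "\<forall>\<^sub>F l in at_right 0. g (x l) 0 < 0"
    using assms(1) by (rule order_tendstoD)
  moreover have "\<forall>\<^sub>F l in at_right (0::real). 0 < l \<and> l < 1"
    unfolding eventually_at_right_field by (intro exI[of _ 1]) auto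
  ultimately have "\<forall>\<^sub>F l in at_right 0. g (x l) 0 < 0 \<and> 0 < l \<and> l < 1"
    by eventually_elim simp
  then have "\<exists>l. g (x l) 0 < 0 \<and> 0 < l \<and> l < 1"
    by (rule eventually_happens'[rotated]) simp
  then obtain l where l: "g (x l) 0 < 0" "0 < l" "l < 1"
    by blast
  have "(1 - l) * (l / (1 - l)) = l"
    using l by simp
  then have "(1 - l) *\<^sub>R x l = (1 - l) *\<^sub>R ubar + l *\<^sub>R (ubar - u)"
    by (simp add: x_def scaleR_add_right)
  then have "(1 - l) *\<^sub>R x l + l *\<^sub>R u = ubar"
    by (simp add: algebra_simps)
  have "norm z \<le> B / l" if "g u z \<le> 0" for z
  proof -
    have "g ubar (l *\<^sub>R z) \<le> (1 - l) * g (x l) 0 + l * g u z"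
      using convex_combination_le[of "1 - l" l "x l" u 0 z] l \<open>(1 - l) *\<^sub>R x l + l *\<^sub>R u = ubar\<close>
      by simp
    also have "\<dots> \<le> 0"
      using l that by (simp add: add_nonpos_nonpos mult_nonneg_nonpos)
    finally have "l * norm z \<le> B"
      using B l by fastforce
    with l show ?thesis
      by (simp add: field_simps)
  qed
  then show ?thesis
    unfolding bounded_iff by blast
qed

lemma bdd_above_ray_sublevel:
  assumes "bounded {z. g u z \<le> 0}" "w \<noteq> 0"
  shows "bdd_above (ray_sublevel g w u)"
proof -
  obtain B where B: "\<And>z. g u z \<le> 0 \<Longrightarrow> norm z \<le> B"
    using assms(1) unfolding bounded_iff by auto
  show ?thesis
  proof (rule bdd_aboveI)
    fix r assume "r \<in> ray_sublevel g w u"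
    then have "r * norm w \<le> B"
      using B[of "r *\<^sub>R w"] by (simp add: ray_sublevel_def)
    with assms(2) show "r \<le> B / norm w"
      by (simp add: field_simps)
  qed
qed

lemma closed_ray_sublevel: "closed (ray_sublevel g w u)"
proof -
  have "continuous_on UNIV (\<lambda>r. g u (r *\<^sub>R w))"
    using isCont_ray by (simp add: continuous_at_imp_continuous_on)
  then show ?thesis
    unfolding ray_sublevel_def by (intro closed_Collect_conj closed_Collect_le continuous_intros) auto
qed

lemma ray_radius_upper:
  "bdd_above (ray_sublevel g w u) \<Longrightarrow> r \<in> ray_sublevel g w u \<Longrightarrow> r \<le> ray_radius g w u"
  unfolding ray_radius_def by (rule cSup_upper)

lemma ray_radius_mem:
  assumes "g u 0 \<le> 0" "bdd_above (ray_sublevel g w u)"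
  shows "ray_radius g w u \<in> ray_sublevel g w u"
  unfolding ray_radius_def
  using assms closed_ray_sublevel by (intro closed_contains_Sup) (auto simp: ray_sublevel_def)

lemma ray_radius_nonneg:
  "g u 0 \<le> 0 \<Longrightarrow> bdd_above (ray_sublevel g w u) \<Longrightarrow> 0 \<le> ray_radius g w u"
  using ray_radius_mem by (simp add: ray_sublevel_def)

lemma ray_radius_pos:
  assumes "g u 0 < 0" "bdd_above (ray_sublevel g w u)"
  shows "0 < ray_radius g w u"
proof -
  have "\<forall>\<^sub>F r in at_right 0. g u (r *\<^sub>R w) < 0"
    using isCont_ray[where u = u and w = w and r = 0] assms(1)
    by (intro order_tendstoD(2)) (auto intro: tendsto_within_subset simp: isCont_def)
  then have "\<forall>\<^sub>F r in at_right 0. g u (r *\<^sub>R w) < 0 \<and> 0 < r"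
    by (intro eventually_conj eventually_at_right_less)
  then have "\<exists>r. g u (r *\<^sub>R w) < 0 \<and> 0 < r"
    by (rule eventually_happens'[rotated]) simp
  then obtain r where "g u (r *\<^sub>R w) < 0" "0 < r"
    by blast
  then have "r \<in> ray_sublevel g w u" "0 < r"
    by (simp_all add: ray_sublevel_def)
  with ray_radius_upper[OF assms(2)] show ?thesis
    by fastforce
qed

lemma ray_sublevel_eq_atLeastAtMost:
  assumes "g u 0 \<le> 0" "bdd_above (ray_sublevel g w u)"
  shows "ray_sublevel g w u = {0..ray_radius g w u}"
proof
  show "ray_sublevel g w u \<subseteq> {0..ray_radius g w u}"
    using ray_radius_upper[OF assms(2)] by (auto simp: ray_sublevel_def)
  show "{0..ray_radius g w u} \<subseteq> ray_sublevel g w u"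
  proof
    fix r assume r: "r \<in> {0..ray_radius g w u}"
    define \<rho> where "\<rho> = ray_radius g w u"
    have "g u (\<rho> *\<^sub>R w) \<le> 0" "0 \<le> \<rho>"
      using ray_radius_mem[OF assms] by (auto simp: \<rho>_def ray_sublevel_def)
    show "r \<in> ray_sublevel g w u"
    proof (cases "\<rho> = 0")
      case False
      define t where "t = r / \<rho>"
      have t: "0 \<le> t" "t \<le> 1" "t * \<rho> = r"
        using r False \<open>0 \<le> \<rho>\<close> by (auto simp: t_def \<rho>_def)
      have "g u (r *\<^sub>R w) \<le> (1 - t) * g u 0 + t * g u (\<rho> *\<^sub>R w)"
        using convex_combination_le[of "1 - t" t u u 0 "\<rho> *\<^sub>R w"] t by (simp add: scaleR_collapse)
      also have "\<dots> \<le> 0"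
        using t assms(1) \<open>g u (\<rho> *\<^sub>R w) \<le> 0\<close> by (simp add: add_nonpos_nonpos mult_nonneg_nonpos)
      finally show ?thesis
        using r by (simp add: ray_sublevel_def)
    qed (use r assms(1) in \<open>auto simp: \<rho>_def ray_sublevel_def\<close>)
  qed
qed

lemma ray_radius_concave:
  assumes "convex C" "\<And>u. u \<in> C \<Longrightarrow> g u 0 \<le> 0" "\<And>u. bdd_above (ray_sublevel g w u)"
  shows "concave_on C (ray_radius g w)"
  unfolding concave_on_iff
proof (intro conjI ballI allI impI assms(1))
  fix u1 u2 and a b :: real assume u: "u1 \<in> C" "u2 \<in> C" and ab: "0 \<le> a" "0 \<le> b" "a + b = 1"
  let ?\<rho> = "ray_radius g w"
  have "g (a *\<^sub>R u1 + b *\<^sub>R u2) ((a * ?\<rho> u1 + b * ?\<rho> u2) *\<^sub>R w) \<le> a * g u1 (?\<rho> u1 *\<^sub>R w) + b * g u2 (?\<rho> u2 *\<^sub>R w)"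
    using convex_combination_le[OF ab, of u1 u2 "?\<rho> u1 *\<^sub>R w" "?\<rho> u2 *\<^sub>R w"] by (simp add: scaleR_add_left)
  also have "\<dots> \<le> 0"
    using ray_radius_mem[OF assms(2) assms(3)] u ab
    by (simp add: ray_sublevel_def add_nonpos_nonpos mult_nonneg_nonpos)
  finally have "a * ?\<rho> u1 + b * ?\<rho> u2 \<in> ray_sublevel g w (a *\<^sub>R u1 + b *\<^sub>R u2)"
    using ray_radius_nonneg[OF assms(2) assms(3)] u ab by (simp add: ray_sublevel_def)
  then show "a * ?\<rho> u1 + b * ?\<rho> u2 \<le> ?\<rho> (a *\<^sub>R u1 + b *\<^sub>R u2)"
    by (rule ray_radius_upper[OF assms(3)])
qed

end

lemma radial_prob_eq_chi_integral:
  fixes g :: "'u \<Rightarrow> real^'m \<Rightarrow> real"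
  assumes "ray_sublevel g (R *v v) u = {0..ray_radius g (R *v v) u}"
  shows "radial_prob g R u v = integral {0..ray_radius g (R *v v) u} (chi_density CARD('m))"
  using assms by (simp add: radial_prob_def ray_sublevel_def measure_chi_distribution_atLeastAtMost)

lemma radial_prob_clarke_regular_at:
  fixes g :: "'u::real_normed_vector \<Rightarrow> real^'m \<Rightarrow> real"
  assumes "convex_constraint g" "R *v v \<noteq> 0" "open N" "x \<in> N"
    and neg: "\<And>u. u \<in> N \<Longrightarrow> g u 0 < 0" and bounded: "\<And>u. bounded {z. g u z \<le> 0}"
  shows "clarke_regular_at (\<lambda>u. - radial_prob g R u v) x"
proof -
  interpret convex_constraint g by fact
  define w where "w = R *v v"
  obtain \<delta> where "\<delta> > 0" "ball x \<delta> \<subseteq> N"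
    using assms(3,4) open_contains_ball by blast
  have bdd: "bdd_above (ray_sublevel g w u)" for u
    using bdd_above_ray_sublevel[OF bounded] assms(2) by (simp add: w_def)
  have neg': "g u 0 \<le> 0" if "u \<in> ball x \<delta>" for u
    using neg that \<open>ball x \<delta> \<subseteq> N\<close> by force
  show ?thesis
  proof (rule clarke_regular_at_comp_convex[where h = "\<lambda>u. - ray_radius g w u" and M = 0
        and I = "{..<0}" and \<phi> = "\<lambda>s. - integral {0..- s} (chi_density CARD('m))" and \<phi>' = "\<lambda>s. chi_density CARD('m) (- s)"])
    show "convex_on (ball x \<delta>) (\<lambda>u. - ray_radius g w u)"
      using ray_radius_concave[OF convex_ball neg' bdd] by (simp add: concave_on_def)
    show "- ray_radius g w y \<le> 0" if "y \<in> ball x \<delta>" for y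
      using ray_radius_nonneg[OF neg'[OF that] bdd] by simp
    show "- ray_radius g w x \<in> {..<0}"
      using ray_radius_pos[OF neg[OF assms(4)] bdd] by simp
    show "((\<lambda>s. - integral {0..- s} (chi_density CARD('m))) has_real_derivative chi_density CARD('m) (- s)) (at s)"
      if "s \<in> {..<0}" for s
      using that by (intro chi_cdf_reflect_has_real_derivative) auto
    show "isCont (\<lambda>s. chi_density CARD('m) (- s)) (- ray_radius g w x)"
      using ray_radius_pos[OF neg[OF assms(4)] bdd]
      by (intro isCont_o2[where f = uminus, OF _ isCont_chi_density]) auto
    show "- radial_prob g R y v = - integral {0..- (- ray_radius g w y)} (chi_density CARD('m))"
      if "y \<in> ball x \<delta>" for y
      using radial_prob_eq_chi_integral[OF ray_sublevel_eq_atLeastAtMost[OF neg'[OF that] bdd, unfolded w_def]]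
      by (simp add: w_def)
  qed (simp_all add: \<open>\<delta> > 0\<close> chi_density_nonneg)
qed

theorem lemma2p2:
  fixes g :: "'u::banach \<Rightarrow> real^'m \<Rightarrow> real"
    and Sigma R :: "real^'m^'m"
    and ubar :: 'u
    and N :: "'u set"
  assumes "reflexive_space TYPE('u)"
    and "separable_type TYPE('u)"
    and "covariance_matrix Sigma"
    and "R ** transpose R = Sigma"
    and "locally_lipschitz_on UNIV (\<lambda>(u, z). g u z)"
    and "convex_on UNIV (\<lambda>(u, z). g u z)"
    and "g ubar 0 < 0"
    and "bounded {z. g ubar z \<le> 0}"
    and "open N" and "ubar \<in> N"
    and "\<forall>u\<in>N. g u 0 < 0"
  shows "\<forall>v\<in>sphere 0 1. clarke_regular_on N (\<lambda>u. - radial_prob g R u v)"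
proof (intro ballI, unfold clarke_regular_on_def, intro ballI)
  fix v :: "real^'m" and x assume "x \<in> N"
  have "convex_constraint g"
    using assms(6) continuous_on_if_locally_lipschitz_on[OF assms(5)] by unfold_locales
  then have bounded: "bounded {z. g u z \<le> 0}" for u
    using convex_constraint.bounded_sublevel_transfer assms(7,8) by blast
  show "clarke_regular_at (\<lambda>u. - radial_prob g R u v) x"
  proof (cases "R *v v = 0")
    case True
    obtain \<delta> where "\<delta> > 0" "ball x \<delta> \<subseteq> N"
      using assms(9) \<open>x \<in> N\<close> open_contains_ball by blast
    have "radial_prob g R u v = measure (chi_distribution CARD('m)) {0..}" if "u \<in> N" for u
      using True assms(11) that by (simp add: radial_prob_def atLeast_def less_imp_le)
    with \<open>ball x \<delta> \<subseteq> N\<close> \<open>x \<in> N\<close> show ?thesis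
      by (intro clarke_regular_at_locally_constant[OF \<open>\<delta> > 0\<close>]) auto
  next
    case False
    with \<open>convex_constraint g\<close> assms(9,11) \<open>x \<in> N\<close> bounded show ?thesis
      by (intro radial_prob_clarke_regular_at) auto
  qed
qed

end
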